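(* For every $\delta\in\mathcal{D}^{LSL}$, Spearman's rho of the lower semilinear copula $S_\delta$ is $$\rho(S_\delta)=12\int_{[0,1]}\delta(x)\,x\,d\lambda(x)-3.$$
   Context: $\lambda$ is Lebesgue measure on $[0,1]$, $\lambda_2$ on $[0,1]^2$. Let $\mathcal{D}$ be the set of all functions $\delta:[0,1]\to[0,1]$ with $\delta(u)\le u$, $\delta(1)=1$, $\delta$ non-decreasing and 2-Lipschitz. Let $\mathcal{D}^{LSL}$ be the set of $\delta\in\mathcal{D}$ such that $x\mapsto\delta(x)/x$ is non-decreasing and $x\mapsto\delta(x)/x^2$ is non-increasing on $(0,1]$. For $\delta\in\mathcal{D}^{LSL}$, $S_\delta(x,y)=y\,\delta(x)/x$ if $y\le x$ and $x\,\delta(y)/y$ otherwise (convention $0/0:=0$); it is a copula. For a copula $C$, Spearman's rho is $\rho(C)=12\int_{[0,1]^2}C\,d\lambda_2-3$. *)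

theory Defs
  imports "HOL-Analysis.Analysis"
begin

definition diag_D :: "(real \<Rightarrow> real) set" where
  "diag_D = {\<delta>. (\<forall>u\<in>{0..1}. \<delta> u \<in> {0..1} \<and> \<delta> u \<le> u) \<and> \<delta> 1 = 1
      \<and> mono_on {0..1} \<delta> \<and> lipschitz_on 2 {0..1} \<delta>}"

definition diag_D_LSL :: "(real \<Rightarrow> real) set" where
  "diag_D_LSL = {\<delta> \<in> diag_D. mono_on {0<..1} (\<lambda>x. \<delta> x / x)
      \<and> antimono_on {0<..1} (\<lambda>x. \<delta> x / x ^ 2)}"

text \<open>Lower semilinear copula; note x / 0 = 0 in Isabelle, matching 0/0 := 0.\<close>
definition S_LSL :: "(real \<Rightarrow> real) \<Rightarrow> real \<Rightarrow> real \<Rightarrow> real" where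
  "S_LSL \<delta> x y = (if y \<le> x then y * (\<delta> x / x) else x * (\<delta> y / y))"

definition spearman_rho :: "(real \<Rightarrow> real \<Rightarrow> real) \<Rightarrow> real" where
  "spearman_rho C = 12 * (LINT z : {0..1} \<times> {0..1} | lborel. C (fst z) (snd z)) - 3"

end

theory Submission
  imports Defs
begin

text \<open>Writing q(t) = \<delta>(t)/t, the copula is S(x,y) = min(x,y) q(max(x,y)). Split the unit square
  along the diagonal and integrate out the smaller coordinate first: on each triangle the inner
  integral is q(t) t^2/2 = \<delta>(t) t/2, so the two halves add up to the integral of \<delta>(t) t.
  Only measurability and |\<delta>(t)| \<le> t are needed.\<close>

lemma integral_id_indicator_atLeastAtMost:
  fixes a :: real
  assumes "0 \<le> a"
  shows "(\<integral>t. t * indicator {0..a} t \<partial>lborel) = a\<^sup>2 / 2"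
  using integral_power[of 0 a 1] assms by (simp add: power2_eq_square)

lemma integral_id_indicator_atLeastLessThan:
  fixes a :: real
  assumes "0 \<le> a"
  shows "(\<integral>t. t * indicator {0..<a} t \<partial>lborel) = a\<^sup>2 / 2"
proof -
  have "(\<integral>t. t * indicator {0..<a} t \<partial>lborel) = (\<integral>t. t * indicator {0..a} t \<partial>lborel)"
    using AE_lborel_singleton[of a]
    by (intro integral_cong_AE) (auto simp: indicator_def elim!: eventually_mono)
  with assms show ?thesis by (simp add: integral_id_indicator_atLeastAtMost)
qed

lemma integrable_bounded_on_unit_square:
  fixes f :: "real \<times> real \<Rightarrow> real"
  assumes "f \<in> borel_measurable (lborel \<Otimes>\<^sub>M lborel)"
    and "\<And>z. z \<in> {0..1} \<times> {0..1} \<Longrightarrow> \<bar>f z\<bar> \<le> 1"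
    and "\<And>z. z \<notin> {0..1} \<times> {0..1} \<Longrightarrow> f z = 0"
  shows "integrable (lborel \<Otimes>\<^sub>M lborel) f"
  using assms
  by (intro integrableI_bounded_set[where A = "{0..1} \<times> {0..1}" and B = 1])
     (auto simp: lborel.emeasure_pair_measure_Times)

lemma integral_lower_triangle:
  fixes q :: "real \<Rightarrow> real"
  assumes q[measurable]: "q \<in> borel_measurable borel"
    and bound: "\<And>x. x \<in> {0..1} \<Longrightarrow> \<bar>q x\<bar> \<le> 1"
  defines "f \<equiv> \<lambda>x y. if 0 \<le> y \<and> y \<le> x \<and> x \<le> 1 then y * q x else 0"
  shows "integrable (lborel \<Otimes>\<^sub>M lborel) (case_prod f)"
    and "integral\<^sup>L (lborel \<Otimes>\<^sub>M lborel) (case_prod f)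
           = (\<integral>x. indicator {0..1} x * (q x * x\<^sup>2 / 2) \<partial>lborel)"
proof -
  show int: "integrable (lborel \<Otimes>\<^sub>M lborel) (case_prod f)"
  proof (rule integrable_bounded_on_unit_square)
    show "case_prod f \<in> borel_measurable (lborel \<Otimes>\<^sub>M lborel)" unfolding f_def by measurable
  next
    fix z :: "real \<times> real" assume "z \<in> {0..1} \<times> {0..1}"
    then show "\<bar>case_prod f z\<bar> \<le> 1"
      using bound by (cases z) (auto simp: f_def abs_mult intro: mult_le_one)
  qed (auto simp: f_def split: if_splits)
  have inner: "(\<integral>y. f x y \<partial>lborel) = indicator {0..1} x * (q x * x\<^sup>2 / 2)" for x
  proof (cases "0 \<le> x \<and> x \<le> 1")
    case True
    have "f x = (\<lambda>y. q x * (y * indicator {0..x} y))"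
      using True by (auto simp: f_def indicator_def)
    with True show ?thesis by (simp add: integral_id_indicator_atLeastAtMost)
  next
    case False
    then have "f x = (\<lambda>y. 0)" by (auto simp: f_def)
    with False show ?thesis by simp
  qed
  have "integral\<^sup>L (lborel \<Otimes>\<^sub>M lborel) (case_prod f) = (\<integral>x. (\<integral>y. f x y \<partial>lborel) \<partial>lborel)"
    by (rule lborel_pair.integral_fst[OF int, symmetric])
  then show "integral\<^sup>L (lborel \<Otimes>\<^sub>M lborel) (case_prod f)
      = (\<integral>x. indicator {0..1} x * (q x * x\<^sup>2 / 2) \<partial>lborel)"
    by (simp only: inner)
qed

lemma integral_upper_triangle:
  fixes q :: "real \<Rightarrow> real"
  assumes q[measurable]: "q \<in> borel_measurable borel"
    and bound: "\<And>y. y \<in> {0..1} \<Longrightarrow> \<bar>q y\<bar> \<le> 1"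
  defines "f \<equiv> \<lambda>x y. if 0 \<le> x \<and> x < y \<and> y \<le> 1 then x * q y else 0"
  shows "integrable (lborel \<Otimes>\<^sub>M lborel) (case_prod f)"
    and "integral\<^sup>L (lborel \<Otimes>\<^sub>M lborel) (case_prod f)
           = (\<integral>y. indicator {0..1} y * (q y * y\<^sup>2 / 2) \<partial>lborel)"
proof -
  show int: "integrable (lborel \<Otimes>\<^sub>M lborel) (case_prod f)"
  proof (rule integrable_bounded_on_unit_square)
    show "case_prod f \<in> borel_measurable (lborel \<Otimes>\<^sub>M lborel)" unfolding f_def by measurable
  next
    fix z :: "real \<times> real" assume "z \<in> {0..1} \<times> {0..1}"
    then show "\<bar>case_prod f z\<bar> \<le> 1"
      using bound by (cases z) (auto simp: f_def abs_mult intro: mult_le_one)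
  qed (auto simp: f_def split: if_splits)
  have inner: "(\<integral>x. f x y \<partial>lborel) = indicator {0..1} y * (q y * y\<^sup>2 / 2)" for y
  proof (cases "0 \<le> y \<and> y \<le> 1")
    case True
    have "(\<lambda>x. f x y) = (\<lambda>x. q y * (x * indicator {0..<y} x))"
      using True by (auto simp: f_def indicator_def)
    with True show ?thesis by (simp add: integral_id_indicator_atLeastLessThan)
  next
    case False
    then have "(\<lambda>x. f x y) = (\<lambda>x. 0)" by (auto simp: f_def)
    with False show ?thesis by simp
  qed
  have "integral\<^sup>L (lborel \<Otimes>\<^sub>M lborel) (case_prod f) = (\<integral>y. (\<integral>x. f x y \<partial>lborel) \<partial>lborel)"
    by (rule lborel_pair.integral_snd[OF int, symmetric])
  then show "integral\<^sup>L (lborel \<Otimes>\<^sub>M lborel) (case_prod f)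
      = (\<integral>y. indicator {0..1} y * (q y * y\<^sup>2 / 2) \<partial>lborel)"
    by (simp only: inner)
qed

lemma set_integral_S_LSL_unit_square:
  fixes \<delta> :: "real \<Rightarrow> real"
  assumes meas: "set_borel_measurable borel {0..1} \<delta>"
    and bound: "\<And>u. u \<in> {0..1} \<Longrightarrow> \<bar>\<delta> u\<bar> \<le> u"
  shows "(LINT z : {0..1} \<times> {0..1} | lborel. S_LSL \<delta> (fst z) (snd z))
           = (LINT x : {0..1} | lborel. \<delta> x * x)"
proof -
  define q where "q x = indicator {0..1} x * \<delta> x / x" for x :: real
  have q_meas: "q \<in> borel_measurable borel"
    using meas unfolding q_def set_borel_measurable_def by simp
  have q_bound: "\<bar>q x\<bar> \<le> 1" if "x \<in> {0..1}" for x
    using bound[OF that] that by (auto simp: q_def abs_div divide_le_eq_1)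
  define L where "L = (\<lambda>x y. if 0 \<le> y \<and> y \<le> x \<and> x \<le> 1 then y * q x else (0::real))"
  define U where "U = (\<lambda>x y. if 0 \<le> x \<and> x < y \<and> y \<le> 1 then x * q y else (0::real))"
  note L = integral_lower_triangle[OF q_meas q_bound, folded L_def]
  note U = integral_upper_triangle[OF q_meas q_bound, folded U_def]
  have split: "indicator ({0..1} \<times> {0..1}) z *\<^sub>R S_LSL \<delta> (fst z) (snd z)
      = case_prod L z + case_prod U z"
    for z :: "real \<times> real"
    by (cases z) (auto simp: L_def U_def q_def S_LSL_def indicator_def)
  have "(LINT z : {0..1} \<times> {0..1} | lborel. S_LSL \<delta> (fst z) (snd z))
      = integral\<^sup>L (lborel \<Otimes>\<^sub>M lborel) (case_prod L)
        + integral\<^sup>L (lborel \<Otimes>\<^sub>M lborel) (case_prod U)"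
    unfolding set_lebesgue_integral_def lborel_prod[symmetric] split
    using L(1) U(1) by (rule Bochner_Integration.integral_add)
  also have "\<dots> = 2 * (\<integral>x. indicator {0..1} x * (q x * x\<^sup>2 / 2) \<partial>lborel)"
    by (simp only: L(2) U(2))
  also have "\<dots> = (LINT x : {0..1} | lborel. \<delta> x * x)"
    unfolding set_lebesgue_integral_def
    by (subst integral_mult_right_zero[symmetric], rule Bochner_Integration.integral_cong)
       (auto simp: q_def indicator_def power2_eq_square)
  finally show ?thesis .
qed

theorem mainTheorem6:
  assumes "\<delta> \<in> diag_D_LSL"
  shows "spearman_rho (S_LSL \<delta>) = 12 * (LINT x : {0..1} | lborel. \<delta> x * x) - 3"
proof -
  have D: "\<delta> \<in> diag_D" using assms by (simp add: diag_D_LSL_def)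
  then have "continuous_on {0..1} \<delta>"
    by (auto simp: diag_D_def intro: lipschitz_on_continuous_on)
  then have "set_borel_measurable borel {0..1} \<delta>"
    by (simp add: set_measurable_continuous_on)
  moreover have "\<bar>\<delta> u\<bar> \<le> u" if "u \<in> {0..1}" for u
    using D that by (auto simp: diag_D_def)
  ultimately show ?thesis
    unfolding spearman_rho_def by (subst set_integral_S_LSL_unit_square) auto
qed

end
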